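(* Let $\Sigma$ be a finite alphabet, $b\in\Sigma$, $\Gamma=\Sigma\setminus\{b\}$, $L\subseteq\Gamma^+$, and let $\psi$ be a $\mathsf{BE}$ formula over $\Gamma$ such that $L_{act}(\psi)=L$. Then there are $\mathsf{BE}$ formulas (over $\Sigma$) defining, under the action-based semantics, the languages $bL$, $\Sigma^*bL$, $\Sigma^*b(L+\varepsilon)$, $Lb$, $Lb\Sigma^*$, $(L+\varepsilon)b\Sigma^*$, and $bLb$.
   Context: $\Sigma^*$ ($\Sigma^+$) denotes the set of (non-empty) finite words over $\Sigma$, $\varepsilon$ the empty word, concatenation of languages is written by juxtaposition and $L+\varepsilon$ denotes $L\cup\{\varepsilon\}$. For $w=w(0)\cdots w(n)$, $\mathrm{Pref}(w)=\{w(0)\cdots w(i)\mid0\le i\le n-1\}$ and $\mathrm{Suff}(w)=\{w(i)\cdots w(n)\mid1\le i\le n\}$. $\mathsf{BE}$ formulas over an alphabet $\Delta$: $\psi::=a\mid\neg\psi\mid\psi\wedge\psi\mid\langle B\rangle\psi\mid\langle E\rangle\psi$ with $a\in\Delta$; each denotes a language $L_{act}(\psi)\subseteq\Delta^+$: $L_{act}(a)=a^+$, $L_{act}(\neg\psi)=\Delta^+\setminus L_{act}(\psi)$, $L_{act}(\psi_1\wedge\psi_2)=L_{act}(\psi_1)\cap L_{act}(\psi_2)$, $L_{act}(\langle B\rangle\psi)=\{w\in\Delta^+\mid\mathrm{Pref}(w)\cap L_{act}(\psi)\neq\emptyset\}$, $L_{act}(\langle E\rangle\psi)=\{w\in\Delta^+\mid\mathrm{Suff}(w)\cap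 L_{act}(\psi)\neq\emptyset\}$. A formula over $\Gamma\subseteq\Sigma$ is also regarded as a formula over $\Sigma$ when the alphabet is $\Sigma$; a formula $\varphi$ over $\Sigma$ defines a language $M$ if $L_{act}(\varphi)=M$ with $\Delta=\Sigma$. *)

theory Defs
  imports Main
begin

datatype 'a be = Atom 'a | Neg "'a be" | Conj "'a be" "'a be" | DiaB "'a be" | DiaE "'a be"

fun atoms :: "'a be \<Rightarrow> 'a set" where
  "atoms (Atom a) = {a}"
| "atoms (Neg p) = atoms p"
| "atoms (Conj p q) = atoms p \<union> atoms q"
| "atoms (DiaB p) = atoms p"
| "atoms (DiaE p) = atoms p"

definition plus_words :: "'a set \<Rightarrow> 'a list set" where
  "plus_words D = {w. w \<noteq> [] \<and> set w \<subseteq> D}"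

definition Pref :: "'a list \<Rightarrow> 'a list set" where
  "Pref w = {take i w | i. 1 \<le> i \<and> i < length w}"

definition Suff :: "'a list \<Rightarrow> 'a list set" where
  "Suff w = {drop i w | i. 1 \<le> i \<and> i < length w}"

fun lact :: "'a set \<Rightarrow> 'a be \<Rightarrow> 'a list set" where
  "lact D (Atom a) = {w. w \<noteq> [] \<and> set w \<subseteq> {a}}"
| "lact D (Neg p) = plus_words D - lact D p"
| "lact D (Conj p q) = lact D p \<inter> lact D q"
| "lact D (DiaB p) = {w \<in> plus_words D. Pref w \<inter> lact D p \<noteq> {}}"
| "lact D (DiaE p) = {w \<in> plus_words D. Suff w \<inter> lact D p \<noteq> {}}"

definition defines_lang :: "'a set \<Rightarrow> 'a be \<Rightarrow> 'a list set \<Rightarrow> bool" where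
  "defines_lang S \<phi> M \<longleftrightarrow> atoms \<phi> \<subseteq> S \<and> lact S \<phi> = M"

definition conc :: "'a list set \<Rightarrow> 'a list set \<Rightarrow> 'a list set" where
  "conc A B = {u @ v | u v. u \<in> A \<and> v \<in> B}"

end

theory Submission
  imports Defs
begin

(* Over the alphabet \<Sigma>, the formula \<psi> \<and> \<not>\<langle>B\<rangle>\<^sup>=\<langle>E\<rangle>\<^sup>= b, where \<langle>X\<rangle>\<^sup>= p stands for
  p \<or> \<langle>X\<rangle>p (DiaBR, DiaER below), defines L: it excludes the words containing b, and on
  b-free words the semantics over \<Sigma> and over \<Gamma> agree. Prepending the letter b is a structural translation of
  formulas: relativise every subformula to b\<Sigma>\<^sup>+ (the words with strict prefix b) and use that the
  strict prefixes of bu are b and the words bx with x a strict prefix of u, while the strict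
  suffixes of bu are u and the strict suffixes of u. So \<langle>B\<rangle> is kept, \<langle>E\<rangle>p becomes \<langle>E\<rangle>\<langle>E\<rangle>p, and
  an atom a becomes "no strict suffix outside a\<^sup>+". Then \<Sigma>\<^sup>*M is defined by \<langle>E\<rangle>\<^sup>=, unions by
  disjunction, and since swapping \<langle>B\<rangle> and \<langle>E\<rangle> reverses the defined language, appending b
  reduces to prepending it. *)

lemma mem_Pref_iff: "x \<in> Pref w \<longleftrightarrow> x \<noteq> [] \<and> (\<exists>v. v \<noteq> [] \<and> w = x @ v)"
proof
  assume "x \<in> Pref w"
  then obtain i where "1 \<le> i" "i < length w" "x = take i w" unfolding Pref_def by blast
  then show "x \<noteq> [] \<and> (\<exists>v. v \<noteq> [] \<and> w = x @ v)"
    by (auto intro!: exI[of _ "drop i w"])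
next
  assume "x \<noteq> [] \<and> (\<exists>v. v \<noteq> [] \<and> w = x @ v)"
  then show "x \<in> Pref w" unfolding Pref_def
    by (auto intro!: exI[of _ "length x"] simp: Suc_le_eq)
qed

lemma mem_Suff_iff: "x \<in> Suff w \<longleftrightarrow> x \<noteq> [] \<and> (\<exists>u. u \<noteq> [] \<and> w = u @ x)"
proof
  assume "x \<in> Suff w"
  then obtain i where "1 \<le> i" "i < length w" "x = drop i w" unfolding Suff_def by blast
  then show "x \<noteq> [] \<and> (\<exists>u. u \<noteq> [] \<and> w = u @ x)"
    by (auto intro!: exI[of _ "take i w"])
next
  assume "x \<noteq> [] \<and> (\<exists>u. u \<noteq> [] \<and> w = u @ x)"
  then show "x \<in> Suff w" unfolding Suff_def
    by (auto intro!: exI[of _ "length w - length x"] simp: Suc_le_eq)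
qed

lemma Pref_Cons: "Pref (a # u) = (if u = [] then {} else insert [a] ((#) a ` Pref u))"
proof -
  have "x \<in> Pref (a # u) \<longleftrightarrow> u \<noteq> [] \<and> (x = [a] \<or> (\<exists>y. x = a # y \<and> y \<in> Pref u))" for x
    by (auto simp: mem_Pref_iff Cons_eq_append_conv)
  then show ?thesis by auto
qed

lemma Suff_Cons: "Suff (a # u) = (if u = [] then {} else insert u (Suff u))"
  by (auto simp: mem_Suff_iff Cons_eq_append_conv)

lemma Suff_trans: "x \<in> Suff y \<Longrightarrow> y \<in> Suff z \<Longrightarrow> x \<in> Suff z"
  unfolding mem_Suff_iff by (metis Nil_is_append_conv append.assoc)

lemma rev_mem_Suff_iff: "rev x \<in> Suff w \<longleftrightarrow> x \<in> Pref (rev w)"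
  unfolding mem_Pref_iff mem_Suff_iff
  by (metis Nil_is_rev_conv rev_append rev_rev_ident)

lemma rev_mem_Pref_iff: "rev x \<in> Pref w \<longleftrightarrow> x \<in> Suff (rev w)"
  by (metis rev_mem_Suff_iff rev_rev_ident)

lemma plus_words_iff: "w \<in> plus_words D \<longleftrightarrow> w \<noteq> [] \<and> set w \<subseteq> D"
  by (simp add: plus_words_def)

lemma plus_words_mono: "G \<subseteq> D \<Longrightarrow> plus_words G \<subseteq> plus_words D"
  unfolding plus_words_def by blast

lemma Pref_subset_plus_words: "w \<in> plus_words D \<Longrightarrow> Pref w \<subseteq> plus_words D"
  by (fastforce simp: mem_Pref_iff plus_words_iff)

lemma Suff_subset_plus_words: "w \<in> plus_words D \<Longrightarrow> Suff w \<subseteq> plus_words D"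
  by (fastforce simp: mem_Suff_iff plus_words_iff)

lemma Nil_notin_lact: "[] \<notin> lact D \<phi>"
  by (induction \<phi>) (auto simp: plus_words_iff)

lemma lact_subset_plus_words: "atoms \<phi> \<subseteq> D \<Longrightarrow> lact D \<phi> \<subseteq> plus_words D"
  by (induction \<phi>) (auto simp: plus_words_iff)

lemma lact_Int_plus_words:
  assumes "G \<subseteq> D"
  shows "atoms \<psi> \<subseteq> G \<Longrightarrow> lact D \<psi> \<inter> plus_words G = lact G \<psi>"
proof (induction \<psi>)
  case (Atom a)
  then show ?case by (auto simp: plus_words_iff)
next
  case (Neg p)
  then show ?case using plus_words_mono[OF assms] by auto
next
  case (Conj p q)
  then show ?case by auto
next
  case (DiaB p)
  have "Pref w \<inter> lact D p = Pref w \<inter> lact G p" if "w \<in> plus_words G" for w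
    using DiaB Pref_subset_plus_words[OF that] by auto
  then show ?case using plus_words_mono[OF assms] by auto
next
  case (DiaE p)
  have "Suff w \<inter> lact D p = Suff w \<inter> lact G p" if "w \<in> plus_words G" for w
    using DiaE Suff_subset_plus_words[OF that] by auto
  then show ?case using plus_words_mono[OF assms] by auto
qed

lemma Suff_subset_lact_Atom: "u \<in> lact D (Atom a) \<Longrightarrow> Suff u \<subseteq> lact D (Atom a)"
proof
  fix x assume "x \<in> Suff u" and "u \<in> lact D (Atom a)"
  then obtain v where "x \<noteq> []" "u = v @ x" by (auto simp: mem_Suff_iff)
  with \<open>u \<in> lact D (Atom a)\<close> show "x \<in> lact D (Atom a)" by auto
qed

definition Disj :: "'a be \<Rightarrow> 'a be \<Rightarrow> 'a be" where
  "Disj p q = Neg (Conj (Neg p) (Neg q))"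

definition DiaBR :: "'a be \<Rightarrow> 'a be" where
  "DiaBR p = Disj p (DiaB p)"

definition DiaER :: "'a be \<Rightarrow> 'a be" where
  "DiaER p = Disj p (DiaE p)"

definition Letter :: "'a \<Rightarrow> 'a be" where
  "Letter a = Conj (Atom a) (Neg (DiaB (Atom a)))"

definition Contains :: "'a \<Rightarrow> 'a be" where
  "Contains a = DiaBR (DiaER (Atom a))"

lemma atoms_Disj [simp]: "atoms (Disj p q) = atoms p \<union> atoms q"
  by (simp add: Disj_def)

lemma atoms_DiaER [simp]: "atoms (DiaER p) = atoms p"
  by (simp add: DiaER_def)

lemma atoms_Letter [simp]: "atoms (Letter a) = {a}"
  by (simp add: Letter_def)

lemma atoms_Contains [simp]: "atoms (Contains a) = {a}"
  by (simp add: Contains_def DiaBR_def)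

lemma lact_Disj: "lact D (Disj p q) = plus_words D \<inter> (lact D p \<union> lact D q)"
  by (auto simp: Disj_def)

lemma lact_DiaBR: "lact D (DiaBR p) = {w \<in> plus_words D. \<exists>u v. w = u @ v \<and> u \<in> lact D p}"
proof -
  have "w \<in> lact D p \<or> Pref w \<inter> lact D p \<noteq> {} \<longleftrightarrow> (\<exists>u v. w = u @ v \<and> u \<in> lact D p)" for w
  proof
    assume "w \<in> lact D p \<or> Pref w \<inter> lact D p \<noteq> {}"
    then show "\<exists>u v. w = u @ v \<and> u \<in> lact D p"
      by (metis append_Nil2 disjoint_iff mem_Pref_iff)
  next
    assume "\<exists>u v. w = u @ v \<and> u \<in> lact D p"
    then obtain u v where "w = u @ v" "u \<in> lact D p" by blast
    moreover have "u \<noteq> []" using \<open>u \<in> lact D p\<close> Nil_notin_lact by blast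
    ultimately show "w \<in> lact D p \<or> Pref w \<inter> lact D p \<noteq> {}"
      by (cases "v = []") (auto simp: mem_Pref_iff disjoint_iff)
  qed
  then show ?thesis by (auto simp: DiaBR_def lact_Disj)
qed

lemma lact_DiaER: "lact D (DiaER p) = {w \<in> plus_words D. \<exists>u v. w = u @ v \<and> v \<in> lact D p}"
proof -
  have "w \<in> lact D p \<or> Suff w \<inter> lact D p \<noteq> {} \<longleftrightarrow> (\<exists>u v. w = u @ v \<and> v \<in> lact D p)" for w
  proof
    assume "w \<in> lact D p \<or> Suff w \<inter> lact D p \<noteq> {}"
    then show "\<exists>u v. w = u @ v \<and> v \<in> lact D p"
      by (metis append_Nil disjoint_iff mem_Suff_iff)
  next
    assume "\<exists>u v. w = u @ v \<and> v \<in> lact D p"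
    then obtain u v where "w = u @ v" "v \<in> lact D p" by blast
    moreover have "v \<noteq> []" using \<open>v \<in> lact D p\<close> Nil_notin_lact by blast
    ultimately show "w \<in> lact D p \<or> Suff w \<inter> lact D p \<noteq> {}"
      by (cases "u = []") (auto simp: mem_Suff_iff disjoint_iff)
  qed
  then show ?thesis by (auto simp: DiaER_def lact_Disj)
qed

lemma lact_Letter: "a \<in> D \<Longrightarrow> lact D (Letter a) = {[a]}"
  apply (rule set_eqI)
  subgoal for w by (cases w) (auto simp: Letter_def Pref_Cons plus_words_iff)
  done

lemma lact_DiaB_Letter: "a \<in> D \<Longrightarrow> lact D (DiaB (Letter a)) = (#) a ` plus_words D"
  apply (rule set_eqI)
  subgoal for w by (cases w) (auto simp: lact_Letter Pref_Cons plus_words_iff)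
  done

lemma lact_Contains: "lact D (Contains a) = {w \<in> plus_words D. a \<in> set w}"
proof (rule set_eqI, rule iffI)
  fix w assume "w \<in> lact D (Contains a)"
  then obtain x y z where "w \<in> plus_words D" "w = x @ y @ z" "y \<noteq> []" "set y \<subseteq> {a}"
    by (auto simp: Contains_def lact_DiaBR lact_DiaER)
  then show "w \<in> {w \<in> plus_words D. a \<in> set w}"
    by (cases y) auto
next
  fix w assume w: "w \<in> {w \<in> plus_words D. a \<in> set w}"
  then obtain x z where xz: "w = (x @ [a]) @ z" by (auto dest: split_list)
  with w have "x @ [a] \<in> plus_words D" by (auto simp: plus_words_iff)
  moreover have "[a] \<in> lact D (Atom a)" by simp
  ultimately have "x @ [a] \<in> lact D (DiaER (Atom a))" unfolding lact_DiaER by blast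
  with w xz show "w \<in> lact D (Contains a)"
    unfolding Contains_def lact_DiaBR by blast
qed

lemma lact_DiaER_eq_conc:
  assumes "atoms p \<subseteq> D"
  shows "lact D (DiaER p) = conc (lists D) (lact D p)"
  using lact_subset_plus_words[OF assms]
  by (fastforce simp: lact_DiaER conc_def plus_words_iff)

fun be_rev :: "'a be \<Rightarrow> 'a be" where
  "be_rev (Atom a) = Atom a"
| "be_rev (Neg p) = Neg (be_rev p)"
| "be_rev (Conj p q) = Conj (be_rev p) (be_rev q)"
| "be_rev (DiaB p) = DiaE (be_rev p)"
| "be_rev (DiaE p) = DiaB (be_rev p)"

lemma atoms_be_rev: "atoms (be_rev \<phi>) = atoms \<phi>"
  by (induction \<phi>) auto

lemma mem_lact_be_rev_iff: "w \<in> lact D (be_rev \<phi>) \<longleftrightarrow> rev w \<in> lact D \<phi>"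
proof (induction \<phi> arbitrary: w)
  case (DiaB p)
  have "Suff w \<inter> lact D (be_rev p) \<noteq> {} \<longleftrightarrow> Pref (rev w) \<inter> lact D p \<noteq> {}"
    using DiaB rev_mem_Suff_iff by (metis disjoint_iff rev_rev_ident)
  then show ?case by (simp add: plus_words_iff)
next
  case (DiaE p)
  have "Pref w \<inter> lact D (be_rev p) \<noteq> {} \<longleftrightarrow> Suff (rev w) \<inter> lact D p \<noteq> {}"
    using DiaE rev_mem_Pref_iff by (metis disjoint_iff rev_rev_ident)
  then show ?case by (simp add: plus_words_iff)
qed (auto simp: plus_words_iff)

lemma mem_rev_image_iff: "w \<in> rev ` A \<longleftrightarrow> rev w \<in> A"
  by (metis image_iff rev_rev_ident)

lemma lact_be_rev: "lact D (be_rev \<phi>) = rev ` lact D \<phi>"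
  by (auto simp: mem_lact_be_rev_iff mem_rev_image_iff)

fun be_prepend :: "'a \<Rightarrow> 'a be \<Rightarrow> 'a be" where
  "be_prepend b (Atom a) = Conj (DiaB (Letter b)) (Neg (DiaE (Neg (Atom a))))"
| "be_prepend b (Neg p) = Conj (DiaB (Letter b)) (Neg (be_prepend b p))"
| "be_prepend b (Conj p q) = Conj (be_prepend b p) (be_prepend b q)"
| "be_prepend b (DiaB p) = Conj (DiaB (Letter b)) (DiaB (be_prepend b p))"
| "be_prepend b (DiaE p) = Conj (DiaB (Letter b)) (DiaE (DiaE p))"

lemma atoms_be_prepend: "atoms (be_prepend b \<phi>) \<subseteq> insert b (atoms \<phi>)"
  by (induction \<phi>) (auto simp: Letter_def)

lemma Cons_image_Int_eqI:
  assumes "\<And>u. u \<in> plus_words D \<Longrightarrow> b # u \<in> X \<longleftrightarrow> u \<in> M" and "M \<subseteq> plus_words D"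
  shows "(#) b ` plus_words D \<inter> X = (#) b ` M"
proof (intro set_eqI iffI)
  fix w assume "w \<in> (#) b ` plus_words D \<inter> X"
  then obtain u where "w = b # u" "u \<in> plus_words D" "b # u \<in> X" by blast
  with assms(1) show "w \<in> (#) b ` M" by blast
next
  fix w assume "w \<in> (#) b ` M"
  then obtain u where "w = b # u" "u \<in> M" by blast
  with assms show "w \<in> (#) b ` plus_words D \<inter> X" by blast
qed

lemma lact_be_prepend:
  assumes "b \<in> D" and "atoms \<phi> \<subseteq> D"
  shows "lact D (be_prepend b \<phi>) = (#) b ` lact D \<phi>"
  using assms(2)
proof (induction \<phi>)
  case (Atom a)
  have "b # u \<in> lact D (Neg (DiaE (Neg (Atom a)))) \<longleftrightarrow> u \<in> lact D (Atom a)"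
    if "u \<in> plus_words D" for u
  proof -
    have bu: "b # u \<in> plus_words D" using that assms(1) by (simp add: plus_words_iff)
    have "b # u \<in> lact D (Neg (DiaE (Neg (Atom a)))) \<longleftrightarrow> Suff (b # u) \<subseteq> lact D (Atom a)"
      using bu Suff_subset_plus_words[OF bu] by (simp only: lact.simps(2,5)) blast
    also have "\<dots> \<longleftrightarrow> u \<in> lact D (Atom a)"
      using that Suff_subset_lact_Atom[of u D a] by (simp add: Suff_Cons plus_words_iff) blast
    finally show ?thesis .
  qed
  then show ?case
    unfolding be_prepend.simps lact.simps(3) lact_DiaB_Letter[OF assms(1)]
    using Atom lact_subset_plus_words[of "Atom a" D] by (intro Cons_image_Int_eqI)
next
  case (Neg p)
  have "b # u \<in> lact D (Neg (be_prepend b p)) \<longleftrightarrow> u \<in> lact D (Neg p)"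
    if "u \<in> plus_words D" for u
    using that assms(1) Neg by (auto simp: plus_words_iff)
  then show ?case
    unfolding be_prepend.simps lact.simps(3) lact_DiaB_Letter[OF assms(1)]
    by (intro Cons_image_Int_eqI) auto
next
  case (Conj p q)
  then show ?case by auto
next
  case (DiaB p)
  have "Pref (b # u) \<inter> (#) b ` lact D p \<noteq> {} \<longleftrightarrow> Pref u \<inter> lact D p \<noteq> {}"
    if "u \<in> plus_words D" for u
    using that Nil_notin_lact[of D p] by (auto simp: Pref_Cons plus_words_iff)
  then have "b # u \<in> lact D (DiaB (be_prepend b p)) \<longleftrightarrow> u \<in> lact D (DiaB p)"
    if "u \<in> plus_words D" for u
    using that assms(1) DiaB by (auto simp: plus_words_iff)
  then show ?case
    unfolding be_prepend.simps lact.simps(3) lact_DiaB_Letter[OF assms(1)]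
    by (intro Cons_image_Int_eqI) auto
next
  case (DiaE p)
  have "Suff (b # u) \<inter> lact D (DiaE p) \<noteq> {} \<longleftrightarrow> Suff u \<inter> lact D p \<noteq> {}"
    if "u \<in> plus_words D" for u
    using that Suff_trans[of _ _ u] by (auto simp: Suff_Cons plus_words_iff)
  then have "b # u \<in> lact D (DiaE (DiaE p)) \<longleftrightarrow> u \<in> lact D (DiaE p)"
    if "u \<in> plus_words D" for u
    using that assms(1) by (auto simp: plus_words_iff)
  then show ?case
    unfolding be_prepend.simps lact.simps(3) lact_DiaB_Letter[OF assms(1)]
    by (intro Cons_image_Int_eqI) auto
qed

lemma conc_singleton: "conc {[b]} M = (#) b ` M"
  by (auto simp: conc_def)

lemma conc_singleton_insert_Nil: "conc {[b]} (insert [] M) = conc {[b]} M \<union> {[b]}"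
  by (auto simp: conc_def)

lemma conc_assoc: "conc (conc A B) C = conc A (conc B C)"
  unfolding conc_def by (auto, metis append.assoc, metis append.assoc)

lemma rev_image_conc: "rev ` conc A B = conc (rev ` B) (rev ` A)"
proof (rule set_eqI)
  fix w
  have "w \<in> rev ` conc A B \<longleftrightarrow> (\<exists>u v. rev w = u @ v \<and> u \<in> A \<and> v \<in> B)"
    by (simp add: conc_def mem_rev_image_iff)
  also have "\<dots> \<longleftrightarrow> (\<exists>x y. w = x @ y \<and> rev x \<in> B \<and> rev y \<in> A)"
    by (metis rev_append rev_rev_ident)
  also have "\<dots> \<longleftrightarrow> w \<in> conc (rev ` B) (rev ` A)"
    by (simp add: conc_def mem_rev_image_iff)
  finally show "w \<in> rev ` conc A B \<longleftrightarrow> w \<in> conc (rev ` B) (rev ` A)" .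
qed

lemma rev_image_lists: "rev ` lists D = lists D"
  by (auto simp: mem_rev_image_iff)

definition be_definable :: "'a set \<Rightarrow> 'a list set \<Rightarrow> bool" where
  "be_definable D M \<longleftrightarrow> (\<exists>\<phi>. defines_lang D \<phi> M)"

lemma be_definable_Diff_letter:
  assumes "c \<in> D" and "atoms \<psi> \<subseteq> D - {c}"
  shows "be_definable D (lact (D - {c}) \<psi>)"
proof -
  have "lact D (Neg (Contains c)) = plus_words (D - {c})"
    by (auto simp: lact_Contains plus_words_iff)
  then have "lact D (Conj \<psi> (Neg (Contains c))) = lact (D - {c}) \<psi>"
    using lact_Int_plus_words[of "D - {c}" D \<psi>] assms(2) by auto
  moreover have "atoms (Conj \<psi> (Neg (Contains c))) \<subseteq> D"
    using assms by auto
  ultimately show ?thesis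
    unfolding be_definable_def defines_lang_def by blast
qed

lemma be_definable_singleton:
  assumes "b \<in> D"
  shows "be_definable D {[b]}"
proof -
  have "defines_lang D (Letter b) {[b]}"
    using assms by (simp add: defines_lang_def lact_Letter)
  then show ?thesis by (auto simp: be_definable_def)
qed

lemma be_definable_Un:
  assumes "be_definable D M" and "be_definable D N"
  shows "be_definable D (M \<union> N)"
proof -
  obtain \<phi> \<chi> where \<phi>: "atoms \<phi> \<subseteq> D" "lact D \<phi> = M" and \<chi>: "atoms \<chi> \<subseteq> D" "lact D \<chi> = N"
    using assms by (auto simp: be_definable_def defines_lang_def)
  then have "M \<union> N \<subseteq> plus_words D"
    using lact_subset_plus_words by blast
  then have "defines_lang D (Disj \<phi> \<chi>) (M \<union> N)"
    using \<phi> \<chi> by (simp add: defines_lang_def lact_Disj Int_absorb1)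
  then show ?thesis by (auto simp: be_definable_def)
qed

lemma be_definable_conc_lists:
  assumes "be_definable D M"
  shows "be_definable D (conc (lists D) M)"
proof -
  obtain \<phi> where "atoms \<phi> \<subseteq> D" and "lact D \<phi> = M"
    using assms by (auto simp: be_definable_def defines_lang_def)
  then have "defines_lang D (DiaER \<phi>) (conc (lists D) M)"
    by (simp add: defines_lang_def lact_DiaER_eq_conc)
  then show ?thesis by (auto simp: be_definable_def)
qed

lemma be_definable_Cons:
  assumes "b \<in> D" and "be_definable D M"
  shows "be_definable D (conc {[b]} M)"
proof -
  obtain \<phi> where "atoms \<phi> \<subseteq> D" and "lact D \<phi> = M"
    using assms(2) by (auto simp: be_definable_def defines_lang_def)
  then have "defines_lang D (be_prepend b \<phi>) (conc {[b]} M)"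
    using assms(1) atoms_be_prepend[of b \<phi>]
    by (auto simp: defines_lang_def lact_be_prepend conc_singleton)
  then show ?thesis by (auto simp: be_definable_def)
qed

lemma be_definable_Cons_insert_Nil:
  assumes "b \<in> D" and "be_definable D M"
  shows "be_definable D (conc {[b]} (insert [] M))"
  unfolding conc_singleton_insert_Nil
  using be_definable_Un[OF be_definable_Cons[OF assms] be_definable_singleton[OF assms(1)]] .

lemma be_definable_rev:
  assumes "be_definable D M"
  shows "be_definable D (rev ` M)"
proof -
  obtain \<phi> where "defines_lang D \<phi> M"
    using assms by (auto simp: be_definable_def)
  then have "defines_lang D (be_rev \<phi>) (rev ` M)"
    by (simp add: defines_lang_def lact_be_rev atoms_be_rev)
  then show ?thesis by (auto simp: be_definable_def)
qed

theorem lemma4p3: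
  fixes \<Sigma> :: "'a set" and b :: 'a and L :: "'a list set" and \<psi> :: "'a be"
  assumes "finite \<Sigma>" and "b \<in> \<Sigma>"
    and "L \<subseteq> plus_words (\<Sigma> - {b})"
    and "atoms \<psi> \<subseteq> \<Sigma> - {b}"
    and "lact (\<Sigma> - {b}) \<psi> = L"
  shows "(\<exists>\<phi>. defines_lang \<Sigma> \<phi> (conc {[b]} L))
    \<and> (\<exists>\<phi>. defines_lang \<Sigma> \<phi> (conc (lists \<Sigma>) (conc {[b]} L)))
    \<and> (\<exists>\<phi>. defines_lang \<Sigma> \<phi> (conc (lists \<Sigma>) (conc {[b]} (insert [] L))))
    \<and> (\<exists>\<phi>. defines_lang \<Sigma> \<phi> (conc L {[b]}))
    \<and> (\<exists>\<phi>. defines_lang \<Sigma> \<phi> (conc L (conc {[b]} (lists \<Sigma>))))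
    \<and> (\<exists>\<phi>. defines_lang \<Sigma> \<phi> (conc (insert [] L) (conc {[b]} (lists \<Sigma>))))
    \<and> (\<exists>\<phi>. defines_lang \<Sigma> \<phi> (conc {[b]} (conc L {[b]})))"
proof -
  have L: "be_definable \<Sigma> L"
    using be_definable_Diff_letter[OF assms(2,4)] assms(5) by simp
  note Cons = be_definable_Cons[OF assms(2)]
    and Cons_Nil = be_definable_Cons_insert_Nil[OF assms(2)]
  have R: "be_definable \<Sigma> (rev ` L)"
    using be_definable_rev[OF L] .
  have "be_definable \<Sigma> (rev ` conc {[b]} (rev ` L))"
    and "be_definable \<Sigma> (rev ` conc (lists \<Sigma>) (conc {[b]} (rev ` L)))"
    and "be_definable \<Sigma> (rev ` conc (lists \<Sigma>) (conc {[b]} (insert [] (rev ` L))))"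
    using be_definable_rev[OF Cons[OF R]]
      be_definable_rev[OF be_definable_conc_lists[OF Cons[OF R]]]
      be_definable_rev[OF be_definable_conc_lists[OF Cons_Nil[OF R]]] .
  then have right: "be_definable \<Sigma> (conc L {[b]})"
      "be_definable \<Sigma> (conc L (conc {[b]} (lists \<Sigma>)))"
      "be_definable \<Sigma> (conc (insert [] L) (conc {[b]} (lists \<Sigma>)))"
    by (simp_all add: rev_image_conc rev_image_lists image_image conc_assoc)
  show ?thesis
    unfolding be_definable_def[symmetric]
    using L right by (intro conjI Cons Cons_Nil be_definable_conc_lists)
qed

end
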